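(* Let $p$ be a prime, $n$ a positive integer, $S\subseteq S_n$ containing the identity and $G$ the subgroup generated by $S$. Suppose $x_0,x_1,\dots,x_{n-1}$ is a basis of $\mathbb{Z}_p^n$ such that for every $j\in\{0,\dots,n-1\}$ and every $g\in G$, the vector $x_j-g\cdot x_j$ lies in the span of $x_0,\dots,x_{j-1}$ (the zero space when $j=0$). For $i\in\{1,\dots,p^n-1\}$ let $y_i=x_{v_p(i)}$, where $v_p$ is the $p$-adic valuation. Then $y_1,\dots,y_{p^n-1}$ is a winning sequence of moves in the $(S,p)$-game.
   Context: For $g\in S_n$ and $x\in\mathbb{Z}_p^n$, $g\cdot x$ is the vector $x'$ with $x'_{g(i)}=x_i$. The $(S,m)$-game: $n$ counters at positions $1,\dots,n$, each showing an element of $\mathbb{Z}_m$; a configuration is a vector in $\mathbb{Z}_m^n$, initially arbitrary and unknown. Each turn the player chooses a move $y\in\mathbb{Z}_m^n$ added coordinatewise, then an adversarially chosen $\sigma\in S$ is applied, replacing $x$ by $\sigma\cdot x$. The player wins if at some moment (including initially) all counters show $0$. A finite sequence of moves is winning if it forces the zero configuration at some time for every initial configuration and every choice of permutations. *)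

theory Defs
  imports "HOL-Algebra.Sym_Groups" "HOL-Algebra.Generated_Groups"
    "HOL-Number_Theory.Number_Theory"
begin

text \<open>Vectors of Z_p^n are represented by integer-valued functions on positions 1..n,
  read modulo p; coordinates outside {1..n} are irrelevant.\<close>

definition perm_act :: "(nat \<Rightarrow> nat) \<Rightarrow> (nat \<Rightarrow> int) \<Rightarrow> (nat \<Rightarrow> int)" where
  "perm_act g x = (\<lambda>i. x (Hilbert_Choice.inv g i))"

definition vec_eq_mod :: "int \<Rightarrow> nat \<Rightarrow> (nat \<Rightarrow> int) \<Rightarrow> (nat \<Rightarrow> int) \<Rightarrow> bool" where
  "vec_eq_mod p n u v \<longleftrightarrow> (\<forall>i\<in>{1..n}. [u i = v i] (mod p))"

definition in_span_mod :: "int \<Rightarrow> nat \<Rightarrow> (nat \<Rightarrow> nat \<Rightarrow> int) \<Rightarrow> nat set \<Rightarrow> (nat \<Rightarrow> int) \<Rightarrow> bool" where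
  "in_span_mod p n x K v \<longleftrightarrow> (\<exists>c :: nat \<Rightarrow> int. vec_eq_mod p n v (\<lambda>i. \<Sum>k\<in>K. c k * x k i))"

definition is_basis_mod :: "int \<Rightarrow> nat \<Rightarrow> (nat \<Rightarrow> nat \<Rightarrow> int) \<Rightarrow> bool" where
  "is_basis_mod p n x \<longleftrightarrow>
     (\<forall>c :: nat \<Rightarrow> int. vec_eq_mod p n (\<lambda>i. \<Sum>k<n. c k * x k i) (\<lambda>_. 0) \<longrightarrow> (\<forall>k<n. [c k = 0] (mod p)))
   \<and> (\<forall>v. in_span_mod p n x {..<n} v)"

primrec game_config :: "(nat \<Rightarrow> nat \<Rightarrow> int) \<Rightarrow> (nat \<Rightarrow> nat \<Rightarrow> nat) \<Rightarrow> (nat \<Rightarrow> int) \<Rightarrow> nat \<Rightarrow> nat \<Rightarrow> int" where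
  "game_config y \<sigma> c 0 = c"
| "game_config y \<sigma> c (Suc t) = perm_act (\<sigma> t) (\<lambda>i. game_config y \<sigma> c t i + y (Suc t) i)"

definition winning_seq :: "(nat \<Rightarrow> nat) set \<Rightarrow> int \<Rightarrow> nat \<Rightarrow> nat \<Rightarrow> (nat \<Rightarrow> nat \<Rightarrow> int) \<Rightarrow> bool" where
  "winning_seq S p n m y \<longleftrightarrow>
     (\<forall>c \<sigma>. (\<forall>t<m. \<sigma> t \<in> S) \<longrightarrow>
        (\<exists>t\<le>m. vec_eq_mod p n (game_config y \<sigma> c t) (\<lambda>_. 0)))"

end

theory Submission
  imports Defs
begin

text \<open>
  Let V_j be the span of x_0, ..., x_(j-1). Every g \<in> G maps V_j into itself and fixes x_j
  modulo V_j, so a configuration congruent to a x_j modulo V_j stays so under moves from V_j and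
  under the adversary's permutations, while the move x_j raises a by one. By induction on j, the
  first p^j - 1 moves y_i = x_(v_p(i)), which all lie in V_j, win from every start in V_j. The
  first p^(j+1) - 1 moves are p copies of that sequence, separated by the move x_j at the
  multiples of p^j. Starting from c \<equiv> a x_j, after b copies and separators the configuration is
  (a + b) x_j modulo V_j, so for b \<equiv> -a (mod p) it lies in V_j and the next copy wins.
\<close>

lemma in_span_modI:
  "vec_eq_mod p n v (\<lambda>i. \<Sum>k\<in>K. c k * x k i) \<Longrightarrow> in_span_mod p n x K v"
  unfolding in_span_mod_def by blast

lemma span_zero: "in_span_mod p n x K (\<lambda>_. 0)"
  unfolding in_span_mod_def vec_eq_mod_def
  by (rule exI[of _ "\<lambda>_. 0"]) simp

lemma span_cong:
  assumes "vec_eq_mod p n v w" "in_span_mod p n x K v"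
  shows "in_span_mod p n x K w"
  using assms unfolding in_span_mod_def vec_eq_mod_def
  by (meson cong_sym cong_trans)

lemma span_add:
  assumes "in_span_mod p n x K v" "in_span_mod p n x K w"
  shows "in_span_mod p n x K (\<lambda>i. v i + w i)"
proof -
  obtain c d where c: "vec_eq_mod p n v (\<lambda>i. \<Sum>k\<in>K. c k * x k i)"
    and d: "vec_eq_mod p n w (\<lambda>i. \<Sum>k\<in>K. d k * x k i)"
    using assms unfolding in_span_mod_def by blast
  have "vec_eq_mod p n (\<lambda>i. v i + w i) (\<lambda>i. \<Sum>k\<in>K. (c k + d k) * x k i)"
    using c d unfolding vec_eq_mod_def
    by (auto simp: distrib_right sum.distrib intro: cong_add)
  thus ?thesis by (rule in_span_modI)
qed

lemma span_scale:
  assumes "in_span_mod p n x K v"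
  shows "in_span_mod p n x K (\<lambda>i. a * v i)"
proof -
  obtain c where c: "vec_eq_mod p n v (\<lambda>i. \<Sum>k\<in>K. c k * x k i)"
    using assms unfolding in_span_mod_def by blast
  have "vec_eq_mod p n (\<lambda>i. a * v i) (\<lambda>i. \<Sum>k\<in>K. (a * c k) * x k i)"
    using c unfolding vec_eq_mod_def
    by (auto simp: sum_distrib_left[symmetric] mult.assoc intro: cong_mult)
  thus ?thesis by (rule in_span_modI)
qed

lemma span_diff:
  assumes "in_span_mod p n x K v" "in_span_mod p n x K w"
  shows "in_span_mod p n x K (\<lambda>i. v i - w i)"
  using span_add[OF assms(1) span_scale[OF assms(2), of "-1"]] by simp

lemma span_sum:
  assumes "finite A" "\<And>a. a \<in> A \<Longrightarrow> in_span_mod p n x K (f a)"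
  shows "in_span_mod p n x K (\<lambda>i. \<Sum>a\<in>A. f a i)"
  using assms by (induction A rule: finite_induct) (auto intro: span_zero span_add)

lemma span_basis:
  assumes "finite K" "k \<in> K"
  shows "in_span_mod p n x K (x k)"
proof -
  have "(\<Sum>j\<in>K. (if j = k then 1 else 0) * x j i) = x k i" for i
    using assms by (simp add: if_distrib[of "\<lambda>c. c * _"] cong: if_cong)
  hence "vec_eq_mod p n (x k) (\<lambda>i. \<Sum>j\<in>K. (if j = k then 1 else 0) * x j i)"
    unfolding vec_eq_mod_def by simp
  thus ?thesis by (rule in_span_modI)
qed

lemma span_mono:
  assumes "in_span_mod p n x K v" "K \<subseteq> K'" "finite K'"
  shows "in_span_mod p n x K' v"
proof -
  obtain c where c: "vec_eq_mod p n v (\<lambda>i. \<Sum>k\<in>K. c k * x k i)"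
    using assms(1) unfolding in_span_mod_def by blast
  have "(\<Sum>k\<in>K'. (if k \<in> K then c k else 0) * x k i) = (\<Sum>k\<in>K. c k * x k i)" for i
    using assms(2,3) by (simp add: if_distrib[of "\<lambda>c. c * _"] sum.inter_restrict[symmetric]
        Int_absorb1 cong: if_cong)
  hence "vec_eq_mod p n v (\<lambda>i. \<Sum>k\<in>K'. (if k \<in> K then c k else 0) * x k i)"
    using c by simp
  thus ?thesis by (rule in_span_modI)
qed

lemma span_lessThan_Suc_decompose:
  assumes "in_span_mod p n x {..<Suc j} v"
  obtains a where "in_span_mod p n x {..<j} (\<lambda>i. v i - a * x j i)"
proof -
  obtain c where c: "vec_eq_mod p n v (\<lambda>i. \<Sum>k<Suc j. c k * x k i)"
    using assms unfolding in_span_mod_def by blast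
  have "vec_eq_mod p n (\<lambda>i. v i - c j * x j i) (\<lambda>i. \<Sum>k<j. c k * x k i)"
    unfolding vec_eq_mod_def
  proof
    fix i assume "i \<in> {1..n}"
    hence "[v i = c j * x j i + (\<Sum>k<j. c k * x k i)] (mod p)"
      using c unfolding vec_eq_mod_def by (simp add: lessThan_Suc)
    from cong_diff[OF this cong_refl[of "c j * x j i"]]
    show "[v i - c j * x j i = (\<Sum>k<j. c k * x k i)] (mod p)" by simp
  qed
  thus ?thesis using that unfolding in_span_mod_def by blast
qed

lemma span_remove_multiple:
  assumes "in_span_mod p n x K (\<lambda>i. v i - a * w i)" "p dvd a"
  shows "in_span_mod p n x K v"
proof -
  have "vec_eq_mod p n (\<lambda>_. 0) (\<lambda>i. a * w i)"
    using assms(2) unfolding vec_eq_mod_def by (metis cong_0_iff cong_sym dvd_mult2)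
  hence "in_span_mod p n x K (\<lambda>i. a * w i)"
    using span_cong span_zero by metis
  from span_add[OF assms(1) this] show ?thesis by simp
qed

lemma perm_act_vec_eq:
  assumes "g permutes {1..n}" "vec_eq_mod p n v w"
  shows "vec_eq_mod p n (perm_act g v) (perm_act g w)"
  using assms permutes_in_image[OF permutes_inv[OF assms(1)]]
  unfolding vec_eq_mod_def perm_act_def by blast

lemma multiplicity_add_multiple_prime_power:
  fixes p :: nat
  assumes "prime p" "0 < u" "u < p ^ j"
  shows "multiplicity p (b * p ^ j + u) = multiplicity p u"
proof -
  let ?k = "multiplicity p u"
  have nonunit: "\<not> is_unit p" using prime_gt_1_nat[OF assms(1)] by simp
  have "?k < j"
    using assms by (intro multiplicity_lessI nonunit) (auto dest: nat_dvd_not_less)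
  hence "p ^ Suc ?k dvd b * p ^ j"
    by (intro dvd_mult le_imp_power_dvd) simp
  moreover have "\<not> p ^ Suc ?k dvd u"
    using power_dvd_iff_le_multiplicity[of u p "Suc ?k"] assms(2) nonunit by simp
  ultimately have "\<not> p ^ Suc ?k dvd b * p ^ j + u"
    by (simp add: dvd_add_right_iff)
  moreover have "p ^ ?k dvd b * p ^ j + u"
    using \<open>?k < j\<close> by (simp add: le_imp_power_dvd multiplicity_dvd)
  ultimately show ?thesis by (intro multiplicity_eqI)
qed

lemma multiplicity_mult_prime_power:
  fixes p :: nat
  assumes "prime p" "0 < b" "b < p"
  shows "multiplicity p (b * p ^ j) = j"
proof -
  have "multiplicity p b = 0"
    using assms by (intro not_dvd_imp_multiplicity_0) (auto dest: nat_dvd_not_less)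
  thus ?thesis
    using assms prime_elem_multiplicity_mult_distrib[of p b "p ^ j"] by simp
qed

lemma mult_add_less_mult:
  fixes b i p q :: nat
  assumes "b < p" "i < q"
  shows "b * q + i < p * q"
proof -
  have "b * q + i < Suc b * q" using assms(2) by simp
  also have "\<dots> \<le> p * q" using assms(1) by (intro mult_le_mono1) simp
  finally show ?thesis .
qed

lemma game_config_add:
  "game_config y \<sigma> c (s + t) =
     game_config (\<lambda>i. y (s + i)) (\<lambda>i. \<sigma> (s + i)) (game_config y \<sigma> c s) t"
  by (induction t) simp_all

lemma game_config_cong:
  "(\<And>i. i < t \<Longrightarrow> \<sigma> i = \<sigma>' i) \<Longrightarrow> game_config y \<sigma> c t = game_config y \<sigma>' c t"
  by (induction t) simp_all

locale triangular_action =
  fixes p n :: nat and x :: "nat \<Rightarrow> nat \<Rightarrow> int" and G :: "(nat \<Rightarrow> nat) set"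
  assumes permutes: "g \<in> G \<Longrightarrow> g permutes {1..n}"
    and triangular:
      "j < n \<Longrightarrow> g \<in> G \<Longrightarrow> in_span_mod (int p) n x {..<j} (\<lambda>i. x j i - perm_act g (x j) i)"
begin

lemma perm_act_span:
  assumes "g \<in> G" "j \<le> n" "in_span_mod (int p) n x {..<j} v"
  shows "in_span_mod (int p) n x {..<j} (perm_act g v)"
proof -
  obtain c where c: "vec_eq_mod (int p) n v (\<lambda>i. \<Sum>k<j. c k * x k i)"
    using assms(3) unfolding in_span_mod_def by blast
  have "in_span_mod (int p) n x {..<j} (perm_act g (x k))" if "k < j" for k
  proof -
    have "in_span_mod (int p) n x {..<j} (\<lambda>i. x k i - perm_act g (x k) i)"
      using triangular[of k g] assms(1,2) that by (auto intro: span_mono)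
    from span_diff[OF span_basis[of "{..<j}" k] this] that show ?thesis by simp
  qed
  hence "in_span_mod (int p) n x {..<j} (\<lambda>i. \<Sum>k<j. c k * perm_act g (x k) i)"
    by (intro span_sum span_scale) auto
  moreover have "vec_eq_mod (int p) n (\<lambda>i. \<Sum>k<j. c k * perm_act g (x k) i) (perm_act g v)"
    using perm_act_vec_eq[OF permutes[OF assms(1)] c] unfolding vec_eq_mod_def
    by (simp add: perm_act_def cong_sym_eq)
  ultimately show ?thesis by (rule span_cong[rotated])
qed

lemma perm_act_coset:
  assumes "g \<in> G" "j < n" "in_span_mod (int p) n x {..<j} (\<lambda>i. v i - a * x j i)"
  shows "in_span_mod (int p) n x {..<j} (\<lambda>i. perm_act g v i - a * x j i)"
proof -
  have "in_span_mod (int p) n x {..<j} (perm_act g (\<lambda>i. v i - a * x j i))"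
    using assms by (intro perm_act_span) auto
  moreover have "in_span_mod (int p) n x {..<j} (\<lambda>i. a * (x j i - perm_act g (x j) i))"
    using assms triangular by (intro span_scale) auto
  ultimately have "in_span_mod (int p) n x {..<j}
      (\<lambda>i. perm_act g (\<lambda>i. v i - a * x j i) i - a * (x j i - perm_act g (x j) i))"
    by (rule span_diff)
  moreover have "(\<lambda>i. perm_act g (\<lambda>i. v i - a * x j i) i - a * (x j i - perm_act g (x j) i))
      = (\<lambda>i. perm_act g v i - a * x j i)"
    by (simp add: perm_act_def algebra_simps)
  ultimately show ?thesis by simp
qed

lemma game_config_coset:
  assumes "j < n" "\<And>i. i < t \<Longrightarrow> \<sigma> i \<in> G"
    and "\<And>i. i \<in> {1..t} \<Longrightarrow> in_span_mod (int p) n x {..<j} (\<lambda>k. y i k - e i * x j k)"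
    and "in_span_mod (int p) n x {..<j} (\<lambda>k. c k - a * x j k)"
  shows "in_span_mod (int p) n x {..<j}
           (\<lambda>k. game_config y \<sigma> c t k - (a + (\<Sum>i=1..t. e i)) * x j k)"
  using assms(2,3)
proof (induction t)
  case 0
  then show ?case using assms(4) by simp
next
  case (Suc t)
  have "in_span_mod (int p) n x {..<j} (\<lambda>k. (game_config y \<sigma> c t k + y (Suc t) k)
          - (a + (\<Sum>i=1..Suc t. e i)) * x j k)"
    using span_add[OF Suc.IH Suc.prems(2)[of "Suc t"]] Suc.prems
    by (simp add: algebra_simps)
  from perm_act_coset[OF Suc.prems(1) assms(1) this] show ?case by simp
qed

context
  assumes prime: "prime p"
begin

lemma game_config_blocks:
  assumes "j < n" "\<And>t. \<sigma> t \<in> G"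
    and moves: "\<And>i. 0 < i \<Longrightarrow> i < p ^ Suc j \<Longrightarrow> y i = x (multiplicity p i)"
    and "in_span_mod (int p) n x {..<j} (\<lambda>k. c k - a * x j k)"
    and "b < p"
  shows "in_span_mod (int p) n x {..<j} (\<lambda>k. game_config y \<sigma> c (b * p ^ j) k - (a + b) * x j k)"
  using \<open>b < p\<close>
proof (induction b)
  case 0
  then show ?case using assms(4) by simp
next
  case (Suc b)
  let ?q = "p ^ j"
  have q: "0 < ?q" using prime_gt_0_nat[OF prime] by simp
  have block_moves: "in_span_mod (int p) n x {..<j}
      (\<lambda>k. y (b * ?q + i) k - (if i = ?q then 1 else 0) * x j k)" if "i \<in> {1..?q}" for i
  proof -
    have "b * ?q + i \<le> Suc b * ?q" using that by simp
    also have "\<dots> < p ^ Suc j" using mult_add_less_mult[OF Suc.prems q] by simp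
    finally have y: "y (b * ?q + i) = x (multiplicity p (b * ?q + i))"
      using that moves by simp
    show ?thesis
    proof (cases "i = ?q")
      case True
      hence "multiplicity p (b * ?q + i) = j"
        using multiplicity_mult_prime_power[OF prime _ Suc.prems, of j] by (simp add: add.commute)
      then show ?thesis using y True by (simp add: span_zero)
    next
      case False
      hence "i < ?q" using that by simp
      hence "multiplicity p i < j"
        using that prime by (intro multiplicity_lessI) (auto dest: nat_dvd_not_less)
      then show ?thesis
        using y multiplicity_add_multiple_prime_power[OF prime _ \<open>i < ?q\<close>, of b] that False
        by (simp add: span_basis)
    qed
  qed
  have "(\<Sum>i=1..?q. if i = ?q then 1 else 0) = (1::int)"
    using q by (simp add: Suc_le_eq)
  moreover have "\<And>i. i < ?q \<Longrightarrow> \<sigma> (b * ?q + i) \<in> G"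
    using assms(2) by blast
  ultimately have "in_span_mod (int p) n x {..<j} (\<lambda>k.
      game_config (\<lambda>i. y (b * ?q + i)) (\<lambda>i. \<sigma> (b * ?q + i)) (game_config y \<sigma> c (b * ?q)) ?q k
      - (a + int (Suc b)) * x j k)"
    using game_config_coset[where t = ?q and \<sigma> = "\<lambda>i. \<sigma> (b * ?q + i)" and y = "\<lambda>i. y (b * ?q + i)",
        OF assms(1) _ block_moves Suc.IH[OF Suc_lessD[OF Suc.prems]]]
    by (simp add: algebra_simps)
  moreover have "Suc b * ?q = b * ?q + ?q" by simp
  ultimately show ?case by (simp only: game_config_add)
qed

lemma game_config_reaches_zero:
  assumes "j \<le> n" "\<And>t. \<sigma> t \<in> G"
    and "\<And>i. 0 < i \<Longrightarrow> i < p ^ j \<Longrightarrow> y i = x (multiplicity p i)"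
    and "in_span_mod (int p) n x {..<j} c"
  shows "\<exists>t \<le> p ^ j - 1. vec_eq_mod (int p) n (game_config y \<sigma> c t) (\<lambda>_. 0)"
  using assms
proof (induction j arbitrary: y \<sigma> c)
  case 0
  then show ?case unfolding in_span_mod_def by auto
next
  case (Suc j)
  let ?q = "p ^ j"
  have p: "0 < p" using prime prime_gt_0_nat by blast
  obtain a where a: "in_span_mod (int p) n x {..<j} (\<lambda>k. c k - a * x j k)"
    using span_lessThan_Suc_decompose[OF Suc.prems(4)] .
  define b where "b = nat ((- a) mod int p)"
  have b: "int b = (- a) mod int p" using p by (simp add: b_def)
  hence "int b < int p" using p by simp
  hence "b < p" by simp
  have "int p dvd a + int b"
    unfolding b by (simp add: mod_add_right_eq dvd_eq_mod_eq_0)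
  with game_config_blocks[where \<sigma> = \<sigma> and y = y, OF _ Suc.prems(2,3) a \<open>b < p\<close>] Suc.prems(1)
  have start: "in_span_mod (int p) n x {..<j} (game_config y \<sigma> c (b * ?q))"
    by (auto intro: span_remove_multiple)
  have "y (b * ?q + i) = x (multiplicity p i)" if "0 < i" "i < ?q" for i
    using that Suc.prems(3) mult_add_less_mult[OF \<open>b < p\<close> \<open>i < ?q\<close>]
      multiplicity_add_multiple_prime_power[OF prime that] by simp
  then obtain t where "t \<le> ?q - 1"
    and zero: "vec_eq_mod (int p) n
           (game_config (\<lambda>i. y (b * ?q + i)) (\<lambda>i. \<sigma> (b * ?q + i)) (game_config y \<sigma> c (b * ?q)) t)
           (\<lambda>_. 0)"
    using Suc.IH[where \<sigma> = "\<lambda>i. \<sigma> (b * ?q + i)" and y = "\<lambda>i. y (b * ?q + i)", OF _ Suc.prems(2) _ start] Suc.prems(1)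
    by auto
  moreover have "b * ?q + t \<le> p ^ Suc j - 1"
  proof -
    have "0 < ?q" using p by simp
    with \<open>t \<le> ?q - 1\<close> have "t < ?q" by linarith
    from mult_add_less_mult[OF \<open>b < p\<close> this] show ?thesis by simp
  qed
  moreover have "vec_eq_mod (int p) n (game_config y \<sigma> c (b * ?q + t)) (\<lambda>_. 0)"
    using zero by (simp only: game_config_add)
  ultimately show ?case by blast
qed

end

end

lemma triangular_action_generate:
  assumes "S \<subseteq> carrier (sym_group n)"
    and "\<forall>j<n. \<forall>g\<in>generate (sym_group n) S.
           in_span_mod (int p) n x {..<j} (\<lambda>i. x j i - perm_act g (x j) i)"
  shows "triangular_action p n x (generate (sym_group n) S)"
proof
  show "g permutes {1..n}" if "g \<in> generate (sym_group n) S" for g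
    using that group.generate_incl[OF sym_group_is_group assms(1)] sym_group_carrier by blast
qed (use assms(2) in blast)

theorem mainTheorem12:
  fixes p n :: nat and S :: "(nat \<Rightarrow> nat) set" and x :: "nat \<Rightarrow> nat \<Rightarrow> int"
  assumes "prime p" and "n \<ge> 1"
    and "S \<subseteq> carrier (sym_group n)" and "id \<in> S"
    and "is_basis_mod (int p) n x"
    and "\<forall>j<n. \<forall>g\<in>generate (sym_group n) S.
           in_span_mod (int p) n x {..<j} (\<lambda>i. x j i - perm_act g (x j) i)"
  shows "winning_seq S (int p) n (p ^ n - 1) (\<lambda>i. x (multiplicity p i))"
  unfolding winning_seq_def
proof (intro allI impI)
  fix c \<sigma> assume \<sigma>: "\<forall>t<p ^ n - 1. \<sigma> t \<in> S"
  let ?G = "generate (sym_group n) S"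
  interpret triangular_action p n x ?G
    using assms(3,6) by (rule triangular_action_generate)
  have "S \<subseteq> ?G" by (auto intro: generate.incl)
  define \<sigma>' where "\<sigma>' t = (if t < p ^ n - 1 then \<sigma> t else id)" for t
  have "\<sigma>' t \<in> ?G" for t
    using \<sigma> \<open>S \<subseteq> ?G\<close> assms(4) by (auto simp: \<sigma>'_def)
  moreover have "in_span_mod (int p) n x {..<n} c"
    using assms(5) unfolding is_basis_mod_def by blast
  ultimately obtain t where "t \<le> p ^ n - 1"
    and "vec_eq_mod (int p) n (game_config (\<lambda>i. x (multiplicity p i)) \<sigma>' c t) (\<lambda>_. 0)"
    using game_config_reaches_zero[OF assms(1) order.refl, of \<sigma>' "\<lambda>i. x (multiplicity p i)" c]
    by blast
  moreover have "game_config (\<lambda>i. x (multiplicity p i)) \<sigma>' c t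
      = game_config (\<lambda>i. x (multiplicity p i)) \<sigma> c t"
    using \<open>t \<le> p ^ n - 1\<close> by (intro game_config_cong) (simp add: \<sigma>'_def)
  ultimately show "\<exists>t\<le>p ^ n - 1. vec_eq_mod (int p) n
      (game_config (\<lambda>i. x (multiplicity p i)) \<sigma> c t) (\<lambda>_. 0)"
    by auto
qed

end
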